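(* Let $\alpha>-1$ and for integers $0\le j\le k$ define $$a_{k,j}=(-1)^{k-j}\binom{k}{j}\frac{\Gamma(2\alpha+k+j+2)\Gamma(2\alpha+k+2)\Gamma(\alpha+k+1)}{\Gamma(2\alpha+2k+2)\Gamma(2\alpha+j+2)\Gamma(\alpha+j+1)},\quad \hat a_{k,j}=(-1)^{k-j}\binom{k}{j}\frac{\Gamma(2\alpha+k+j+2)\Gamma(2\alpha+k+2)\Gamma(\alpha+k+2)}{\Gamma(2\alpha+2k+2)\Gamma(2\alpha+j+2)\Gamma(\alpha+j+2)}.$$ Define for $k\in\mathbb{N}$ and $0\le i\le k$ the numbers $b_{k,i}$, $\hat b_{k,i}$ recursively by $b_{k,0}=\hat b_{k,0}=1$, $b_{k,i}=-\sum_{j=0}^{i-1}b_{k,j}a_{k-j,k-i}$, $\hat b_{k,i}=-\sum_{j=0}^{i-1}\hat b_{k,j}\hat a_{k-j,k-i}$. Then for all $0\le j\le k$, $$b_{k,j}=\binom{k}{j}\frac{\Gamma(2\alpha+k+2)\Gamma(\alpha+k+1)\Gamma(2\alpha+2k+3-2j)}{\Gamma(2\alpha+k+2-j)\Gamma(\alpha+k+1-j)\Gamma(2\alpha+2k+3-j)},\qquad \hat b_{k,j}=\binom{k}{j}\frac{\Gamma(2\alpha+k+2)\Gamma(\alpha+k+2)\Gamma(2\alpha+2k+3-2j)}{\Gamma(2\alpha+k+2-j)\Gamma(\alpha+k+2-j)\Gamma(2\alpha+2k+3-j)}.$$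
   Context: The numbers $a_{k,j}$ and $\hat a_{k,j}$ are the coefficients of $x^j$ in the monic Cauchy–Laguerre biorthogonal polynomials $p_k(x)$, $q_k(y)$ associated with the weight $x^{\alpha}y^{\alpha+1}e^{-x-y}/(x+y)$ on $(0,\infty)^2$. *)

theory Defs
  imports "HOL-Analysis.Analysis"
begin

definition a_coef :: "real \<Rightarrow> nat \<Rightarrow> nat \<Rightarrow> real" where
  "a_coef \<alpha> k j = (-1) ^ (k - j) * real (k choose j) *
     (Gamma (2*\<alpha> + real k + real j + 2) * Gamma (2*\<alpha> + real k + 2) * Gamma (\<alpha> + real k + 1)) /
     (Gamma (2*\<alpha> + 2 * real k + 2) * Gamma (2*\<alpha> + real j + 2) * Gamma (\<alpha> + real j + 1))"

definition ahat_coef :: "real \<Rightarrow> nat \<Rightarrow> nat \<Rightarrow> real" where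
  "ahat_coef \<alpha> k j = (-1) ^ (k - j) * real (k choose j) *
     (Gamma (2*\<alpha> + real k + real j + 2) * Gamma (2*\<alpha> + real k + 2) * Gamma (\<alpha> + real k + 2)) /
     (Gamma (2*\<alpha> + 2 * real k + 2) * Gamma (2*\<alpha> + real j + 2) * Gamma (\<alpha> + real j + 2))"

function binv :: "(nat \<Rightarrow> nat \<Rightarrow> real) \<Rightarrow> nat \<Rightarrow> nat \<Rightarrow> real" where
  "binv c k i = (if i = 0 then 1 else - (\<Sum>j<i. binv c k j * c (k - j) (k - i)))"
  by auto
termination by (relation "Wellfounded.measure (\<lambda>(c,k,i). i)") auto

definition b_coef :: "real \<Rightarrow> nat \<Rightarrow> nat \<Rightarrow> real" where
  "b_coef \<alpha> = binv (a_coef \<alpha>)"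

definition bhat_coef :: "real \<Rightarrow> nat \<Rightarrow> nat \<Rightarrow> real" where
  "bhat_coef \<alpha> = binv (ahat_coef \<alpha>)"

end

theory Submission
  imports Defs
begin

text \<open>For fixed \<open>k\<close>, the recursion says that \<open>b(k, 0) = 1\<close> and
  \<open>\<Sum>j\<le>i. b(k, j) a(k - j, k - i) = 0\<close> for \<open>0 < i \<le> k\<close>, a unitriangular system with a unique
  solution, so it suffices to check that the closed form solves it. For the closed form, each
  product \<open>b(k, j) a(k - j, k - i)\<close> is a factor depending only on \<open>k\<close> and \<open>i\<close> times
  \<open>(-1)^j (i choose j) (N - 2j) \<Gamma>(N - i - j) / \<Gamma>(N + 1 - j)\<close> with \<open>N = 2\<alpha> + 2 + 2k\<close>, and this
  alternating sum over \<open>j\<close> telescopes to zero.\<close>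

lemma Gamma_pos_neq_0: "(x::real) > 0 \<Longrightarrow> Gamma x \<noteq> 0"
  using Gamma_real_pos[of x] by linarith

lemma Gamma_plus1_pos: "(x::real) > 0 \<Longrightarrow> Gamma (x + 1) = x * Gamma x"
  by (rule Gamma_plus1) auto

lemma binv_eqI:
  fixes A B :: "nat \<Rightarrow> nat \<Rightarrow> real"
  assumes B_0: "B k 0 = 1" and A_diag: "\<And>n. A n n = 1"
    and B_orth: "\<And>i. 0 < i \<Longrightarrow> i \<le> k \<Longrightarrow> (\<Sum>j\<le>i. B k j * A (k - j) (k - i)) = 0"
  shows "i \<le> k \<Longrightarrow> binv A k i = B k i"
proof (induction i rule: less_induct)
  case (less i)
  show ?case
  proof (cases "i = 0")
    case True
    then show ?thesis by (simp add: B_0)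
  next
    case False
    have "binv A k i = - (\<Sum>j<i. binv A k j * A (k - j) (k - i))"
      using False by (subst binv.simps) simp
    also have "\<dots> = - (\<Sum>j<i. B k j * A (k - j) (k - i))"
      using less by (intro arg_cong[where f = uminus] sum.cong) auto
    also have "\<dots> = B k i"
      using B_orth[of i] False less.prems by (simp add: lessThan_Suc_atMost [symmetric] A_diag)
    finally show ?thesis .
  qed
qed

lemma alternating_binomial_sum_eq_0:
  fixes N :: real and T :: "nat \<Rightarrow> real"
  assumes T_rec: "\<And>j. j \<le> m \<Longrightarrow> (N - real m - real j - 2) * T (Suc j) = (N - real j) * T j"
  shows "(\<Sum>j\<le>Suc m. (-1) ^ j * real (Suc m choose j) * (N - 2 * real j) * T j) = 0"
proof -
  \<comment> \<open>By the absorption identity \<open>(j + 1) (m choose (j + 1)) = (m - j) (m choose j)\<close>,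
    the \<open>(j + 1)\<close>-st summand is \<open>U (j + 1) - U j\<close>.\<close>
  define U where "U j = (-1) ^ j * real (m choose j) * ((N - real j) * T j)" for j
  have step: "(-1) ^ Suc j * real (Suc m choose Suc j) * (N - 2 * real (Suc j)) * T (Suc j)
      = U (Suc j) - U j" if "j \<le> m" for j
  proof -
    have "(m - j) * (m choose j) = Suc j * (m choose Suc j)"
      by (simp only: binomial_absorb_comp binomial_absorption)
    then have absorb: "(real m - real j) * real (m choose j) = (real j + 1) * real (m choose Suc j)"
      using that by (metis of_nat_diff of_nat_mult of_nat_Suc add.commute)
    have "U (Suc j) - U j = (-1) ^ Suc j * (real (m choose Suc j) * (N - real j - 1)
        + real (m choose j) * (N - real m - real j - 2)) * T (Suc j)"
      unfolding U_def T_rec[OF that, symmetric] by (simp add: algebra_simps)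
    also have "\<dots> = (-1) ^ Suc j * real (Suc m choose Suc j) * (N - 2 * real (Suc j)) * T (Suc j)"
      using absorb by (simp add: algebra_simps)
    finally show ?thesis ..
  qed
  have "(\<Sum>j\<le>Suc m. (-1) ^ j * real (Suc m choose j) * (N - 2 * real j) * T j)
      = U 0 + (\<Sum>j<Suc m. U (Suc j) - U j)"
    using step by (simp add: sum.atMost_Suc_shift lessThan_Suc_atMost U_def del: sum.atMost_Suc)
  also have "\<dots> = U (Suc m)"
    by (simp add: sum_lessThan_telescope)
  also have "\<dots> = 0"
    by (simp add: U_def)
  finally show ?thesis .
qed

lemma Gamma_binomial_sum_eq_0:
  fixes N :: real
  assumes "0 < i" and "2 * real i < N"
  shows "(\<Sum>j\<le>i. (-1) ^ j * real (i choose j) * (N - 2 * real j) *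
      (Gamma (N - real i - real j) / Gamma (N + 1 - real j))) = 0"
proof -
  obtain m where i: "i = Suc m"
    using assms(1) gr0_implies_Suc by blast
  show ?thesis
    unfolding i
  proof (rule alternating_binomial_sum_eq_0)
    fix j assume "j \<le> m"
    define x where "x = N - real m - real j - 2"
    have "x > 0" and "N - real j > 0"
      using assms(2) \<open>j \<le> m\<close> by (simp_all add: i x_def)
    have "Gamma (N - real (Suc m) - real j) = x * Gamma x"
      using Gamma_plus1_pos[OF \<open>x > 0\<close>] by (simp add: x_def algebra_simps)
    moreover have "Gamma (N + 1 - real j) = (N - real j) * Gamma (N - real j)"
      using Gamma_plus1_pos[OF \<open>N - real j > 0\<close>] by (simp add: algebra_simps)
    moreover have "Gamma (N - real (Suc m) - real (Suc j)) = Gamma x"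
      and "Gamma (N + 1 - real (Suc j)) = Gamma (N - real j)"
      by (simp_all add: x_def algebra_simps)
    ultimately show "x * (Gamma (N - real (Suc m) - real (Suc j)) / Gamma (N + 1 - real (Suc j)))
        = (N - real j) * (Gamma (N - real (Suc m) - real j) / Gamma (N + 1 - real j))"
      using \<open>N - real j > 0\<close> Gamma_pos_neq_0[OF \<open>N - real j > 0\<close>] by simp
  qed
qed

text \<open>With \<open>c = 2\<alpha> + 2\<close>, the choice \<open>d = \<alpha> + 1\<close> gives \<^const>\<open>a_coef\<close> and \<open>d = \<alpha> + 2\<close> gives
  \<^const>\<open>ahat_coef\<close>; \<open>cauchy_laguerre_inv_coef\<close> is the claimed closed form of the inverse.\<close>

definition cauchy_laguerre_coef :: "real \<Rightarrow> real \<Rightarrow> nat \<Rightarrow> nat \<Rightarrow> real" where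
  "cauchy_laguerre_coef c d n m = (-1) ^ (n - m) * real (n choose m) *
     (Gamma (c + real n + real m) * Gamma (c + real n) * Gamma (d + real n)) /
     (Gamma (c + 2 * real n) * Gamma (c + real m) * Gamma (d + real m))"

definition cauchy_laguerre_inv_coef :: "real \<Rightarrow> real \<Rightarrow> nat \<Rightarrow> nat \<Rightarrow> real" where
  "cauchy_laguerre_inv_coef c d k j = real (k choose j) *
     (Gamma (c + real k) * Gamma (d + real k) * Gamma (c + 2 * real k + 1 - 2 * real j)) /
     (Gamma (c + real k - real j) * Gamma (d + real k - real j) * Gamma (c + 2 * real k + 1 - real j))"

lemma cauchy_laguerre_coef_diag:
  assumes "c > 0" "d > 0"
  shows "cauchy_laguerre_coef c d n n = 1"
proof -
  have "c + real n + real n = c + 2 * real n"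
    by simp
  then show ?thesis
    unfolding cauchy_laguerre_coef_def using assms by (simp only:) (simp add: Gamma_pos_neq_0)
qed

lemma cauchy_laguerre_inv_coef_0:
  "c > 0 \<Longrightarrow> d > 0 \<Longrightarrow> cauchy_laguerre_inv_coef c d k 0 = 1"
  by (simp add: cauchy_laguerre_inv_coef_def Gamma_pos_neq_0)

lemma cauchy_laguerre_inv_coef_mult_coef:
  assumes "c > 0" "d > 0" "j \<le> i" "i \<le> k"
  shows "cauchy_laguerre_inv_coef c d k j * cauchy_laguerre_coef c d (k - j) (k - i) =
    (-1) ^ i * real (k choose i) *
      (Gamma (c + real k) * Gamma (d + real k) /
        (Gamma (c + real k - real i) * Gamma (d + real k - real i))) *
    ((-1) ^ j * real (i choose j) * (c + 2 * real k - 2 * real j) *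
      (Gamma (c + 2 * real k - real i - real j) / Gamma (c + 2 * real k + 1 - real j)))"
proof -
  define R where "R = Gamma (c + real k) * Gamma (d + real k) /
      (Gamma (c + real k - real i) * Gamma (d + real k - real i)) *
    ((c + 2 * real k - 2 * real j) *
      (Gamma (c + 2 * real k - real i - real j) / Gamma (c + 2 * real k + 1 - real j)))"
  have "real j \<le> real i" "real i \<le> real k"
    using assms(3,4) by simp_all
  then have nonzero: "Gamma (c + real k - real j) \<noteq> 0" "Gamma (d + real k - real j) \<noteq> 0"
      "Gamma (c + 2 * real k - 2 * real j) \<noteq> 0" "Gamma (c + real k - real i) \<noteq> 0"
      "Gamma (d + real k - real i) \<noteq> 0" "Gamma (c + 2 * real k + 1 - real j) \<noteq> 0"
    using assms(1,2) by (simp_all add: Gamma_pos_neq_0)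
  have inv_eq: "cauchy_laguerre_inv_coef c d k j =
      real (k choose j) * Gamma (c + real k) * Gamma (d + real k) * (c + 2 * real k - 2 * real j) * Gamma (c + 2 * real k - 2 * real j) /
      (Gamma (c + real k - real j) * Gamma (d + real k - real j) * Gamma (c + 2 * real k + 1 - real j))"
    using Gamma_plus1_pos[of "c + 2 * real k - 2 * real j"] assms(1)
      \<open>real j \<le> real i\<close> \<open>real i \<le> real k\<close>
    by (simp add: cauchy_laguerre_inv_coef_def add_diff_eq [symmetric] diff_add_eq [symmetric]
        add.commute)
  have coef_eq: "cauchy_laguerre_coef c d (k - j) (k - i) =
      (-1) ^ (i - j) * real ((k - j) choose (k - i)) * Gamma (c + 2 * real k - real i - real j) *
      Gamma (c + real k - real j) * Gamma (d + real k - real j) /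
      (Gamma (c + 2 * real k - 2 * real j) * Gamma (c + real k - real i) * Gamma (d + real k - real i))"
    using assms(3,4) by (simp add: cauchy_laguerre_coef_def of_nat_diff algebra_simps)
  have "(k choose j) * ((k - j) choose (k - i)) = (k choose i) * (i choose j)"
    using choose_mult[OF assms(3,4)] binomial_symmetric[of "k - i" "k - j"] assms(3,4) by simp
  then have binomials:
    "real (k choose j) * real ((k - j) choose (k - i)) = real (k choose i) * real (i choose j)"
    by (simp only: of_nat_mult [symmetric])
  have sign: "(-1 :: real) ^ (i - j) = (-1) ^ i * (-1) ^ j"
    using assms(3) by (simp add: power_diff field_simps)
  have "cauchy_laguerre_inv_coef c d k j * cauchy_laguerre_coef c d (k - j) (k - i)
      = (-1) ^ (i - j) * (real (k choose j) * real ((k - j) choose (k - i))) * R"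
    unfolding inv_eq coef_eq using nonzero by (simp add: R_def field_simps)
  also have "\<dots> = (-1) ^ i * real (k choose i) *
      (Gamma (c + real k) * Gamma (d + real k) /
        (Gamma (c + real k - real i) * Gamma (d + real k - real i))) *
    ((-1) ^ j * real (i choose j) * (c + 2 * real k - 2 * real j) *
      (Gamma (c + 2 * real k - real i - real j) / Gamma (c + 2 * real k + 1 - real j)))"
    unfolding binomials sign R_def by (simp only: mult_ac)
  finally show ?thesis .
qed

lemma cauchy_laguerre_inv_coef_orthogonal:
  assumes "c > 0" "d > 0" "0 < i" "i \<le> k"
  shows "(\<Sum>j\<le>i. cauchy_laguerre_inv_coef c d k j * cauchy_laguerre_coef c d (k - j) (k - i)) = 0"
proof -
  define N where "N = c + 2 * real k"
  define K where "K = (-1) ^ i * real (k choose i) *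
    (Gamma (c + real k) * Gamma (d + real k) /
      (Gamma (c + real k - real i) * Gamma (d + real k - real i)))"
  have "(\<Sum>j\<le>i. cauchy_laguerre_inv_coef c d k j * cauchy_laguerre_coef c d (k - j) (k - i)) =
      (\<Sum>j\<le>i. K * ((-1) ^ j * real (i choose j) * (N - 2 * real j) *
        (Gamma (N - real i - real j) / Gamma (N + 1 - real j))))"
    using assms
    by (intro sum.cong refl) (simp add: cauchy_laguerre_inv_coef_mult_coef K_def N_def)
  also have "\<dots> = K * (\<Sum>j\<le>i. (-1) ^ j * real (i choose j) * (N - 2 * real j) *
        (Gamma (N - real i - real j) / Gamma (N + 1 - real j)))"
    by (simp only: sum_distrib_left)
  also have "\<dots> = 0"
    using assms Gamma_binomial_sum_eq_0[of i N] by (simp add: N_def)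
  finally show ?thesis .
qed

lemma binv_cauchy_laguerre_coef:
  assumes "c > 0" "d > 0" "j \<le> k"
  shows "binv (cauchy_laguerre_coef c d) k j = cauchy_laguerre_inv_coef c d k j"
  using assms
  by (intro binv_eqI cauchy_laguerre_inv_coef_0 cauchy_laguerre_coef_diag
      cauchy_laguerre_inv_coef_orthogonal)

theorem mainTheorem4:
  fixes \<alpha> :: real and k j :: nat
  assumes "\<alpha> > -1" and "j \<le> k"
  shows "b_coef \<alpha> k j = real (k choose j) *
           (Gamma (2*\<alpha> + real k + 2) * Gamma (\<alpha> + real k + 1) * Gamma (2*\<alpha> + 2 * real k + 3 - 2 * real j)) /
           (Gamma (2*\<alpha> + real k + 2 - real j) * Gamma (\<alpha> + real k + 1 - real j) * Gamma (2*\<alpha> + 2 * real k + 3 - real j))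
     \<and> bhat_coef \<alpha> k j = real (k choose j) *
           (Gamma (2*\<alpha> + real k + 2) * Gamma (\<alpha> + real k + 2) * Gamma (2*\<alpha> + 2 * real k + 3 - 2 * real j)) /
           (Gamma (2*\<alpha> + real k + 2 - real j) * Gamma (\<alpha> + real k + 2 - real j) * Gamma (2*\<alpha> + 2 * real k + 3 - real j))"
proof -
  have c: "2 * \<alpha> + 2 > 0" and d: "\<alpha> + 1 > 0" "\<alpha> + 2 > 0"
    using assms(1) by simp_all
  have a: "a_coef \<alpha> = cauchy_laguerre_coef (2 * \<alpha> + 2) (\<alpha> + 1)"
    and ahat: "ahat_coef \<alpha> = cauchy_laguerre_coef (2 * \<alpha> + 2) (\<alpha> + 2)"
    by (simp_all add: fun_eq_iff a_coef_def ahat_coef_def cauchy_laguerre_coef_def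
        algebra_simps)
  show ?thesis
    unfolding b_coef_def bhat_coef_def a ahat
      binv_cauchy_laguerre_coef[OF c d(1) assms(2)] binv_cauchy_laguerre_coef[OF c d(2) assms(2)]
    by (simp add: cauchy_laguerre_inv_coef_def algebra_simps)
qed

end
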